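(* Let $K$ be a class of partial functions from $\mathbb{N}^k$ to $\mathbb{N}$ (of various arities $k\ge1$) satisfying: (1) $K$ contains all partial recursive functions and is closed under substitution, primitive recursion and the $\mu$-operator; (2) for every unary function $f\in K$ there exist a set $M\subseteq\mathbb{N}$ and unary functions $\alpha,\omega\in K$ whose domains contain $M$, such that the indicator function of $M$ belongs to $K$, and for all $x,y$, $f(x)$ is defined and equals $y$ iff there is $m\in M$ with $\alpha(m)=x$ and $\omega(m)=y$; (3) there exists a binary function $F\in K$ such that for every unary $f\in K$ there is $n$ with $F(n,\cdot)=f$. Let $F$ be such a binary universal function. Then an arbitrary partial function $f$ (of any arity) belongs to $K$ if and only if $f$ is partial recursive relative to $F$.
   Context: Fix a standard recursive bijective encoding of tuples of natural numbers by natural numbers. The graph of a partial function $g:\mathbb{N}^k\to\mathbb{N}$ is the set of codes of tuples $(x_1,\dots,x_k,y)$ with $g(x_1,\dots,x_k)$ defined and equal to $y$. For sets $X,Y\subseteq\mathbb{N}$, $X$ is enumeration reducible to $Y$ if there is a recursively enumerable set $W$ of pairs $(x,u)$ such that $x\in X$ iff there exists $u$ with $(x,u)\in W$ and $D_u\subseteq Y$, where $D_u$ is the finite set with canonical index $u$. A partial function $f$ is partial recursive relative to a partial function $F$ if the graph of $f$ is enumeration reducible to the graph of $F$. *)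

theory Defs
  imports Main "HOL-Library.Nat_Bijection"
begin

text \<open>A partial function N^k -> N is represented as a map on argument lists,
  together with its arity k; it is undefined on lists of the wrong length.\<close>

type_synonym pfun = "nat list \<Rightarrow> nat option"

definition has_arity :: "nat \<Rightarrow> pfun \<Rightarrow> bool" where
  "has_arity k f \<longleftrightarrow> (\<forall>xs. length xs \<noteq> k \<longrightarrow> f xs = None)"

definition pcomp :: "nat \<Rightarrow> pfun \<Rightarrow> pfun list \<Rightarrow> pfun" where
  "pcomp k g hs xs =
     (if length xs = k \<and> (\<forall>h\<in>set hs. h xs \<noteq> None)
      then g (map (\<lambda>h. the (h xs)) hs) else None)"

fun prec_aux :: "pfun \<Rightarrow> pfun \<Rightarrow> nat \<Rightarrow> nat list \<Rightarrow> nat option" where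
  "prec_aux g h 0 ys = g ys"
| "prec_aux g h (Suc n) ys =
     (case prec_aux g h n ys of None \<Rightarrow> None | Some r \<Rightarrow> h (n # r # ys))"

definition prec :: "pfun \<Rightarrow> pfun \<Rightarrow> pfun" where
  "prec g h xs = (case xs of [] \<Rightarrow> None | n # ys \<Rightarrow> prec_aux g h n ys)"

definition pmu :: "pfun \<Rightarrow> pfun" where
  "pmu g xs =
     (if \<exists>n. g (n # xs) = Some 0 \<and> (\<forall>m<n. g (m # xs) \<noteq> None)
      then Some (LEAST n. g (n # xs) = Some 0 \<and> (\<forall>m<n. g (m # xs) \<noteq> None))
      else None)"

inductive partrec :: "nat \<Rightarrow> pfun \<Rightarrow> bool" where
  zero: "partrec 1 (\<lambda>xs. if length xs = 1 then Some 0 else None)"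
| succ: "partrec 1 (\<lambda>xs. if length xs = 1 then Some (Suc (hd xs)) else None)"
| proj: "i < k \<Longrightarrow> partrec k (\<lambda>xs. if length xs = k then Some (xs ! i) else None)"
| compose: "partrec m g \<Longrightarrow> length hs = m \<Longrightarrow> (\<forall>h\<in>set hs. partrec k h)
         \<Longrightarrow> partrec k (pcomp k g hs)"
| prim_rec: "partrec k g \<Longrightarrow> partrec (k + 2) h \<Longrightarrow> partrec (k + 1) (prec g h)"
| minimize: "partrec (k + 1) g \<Longrightarrow> partrec k (pmu g)"

text \<open>Tuples are coded by the standard bijection list_encode; finite sets by
  canonical index D_u = set_decode u.\<close>
definition graph :: "nat \<Rightarrow> pfun \<Rightarrow> nat set" where
  "graph k f = {list_encode (xs @ [y]) | xs y. length xs = k \<and> f xs = Some y}"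

definition re_set :: "nat set \<Rightarrow> bool" where
  "re_set A \<longleftrightarrow> (\<exists>f. partrec 1 f \<and> A = {x. f [x] \<noteq> None})"

definition enum_reducible :: "nat set \<Rightarrow> nat set \<Rightarrow> bool" where
  "enum_reducible X Y \<longleftrightarrow>
     (\<exists>W. re_set W \<and>
        (\<forall>x. x \<in> X \<longleftrightarrow> (\<exists>u. list_encode [x, u] \<in> W \<and> set_decode u \<subseteq> Y)))"

definition rel_partrec :: "nat \<Rightarrow> pfun \<Rightarrow> nat \<Rightarrow> pfun \<Rightarrow> bool" where
  "rel_partrec k f j F \<longleftrightarrow> enum_reducible (graph k f) (graph j F)"

end

theory Submission
  imports Defs
begin

text \<open>
  Both directions rest on hypothesis (2) in a total form: a unary member of K is enumerated by
  total members of K, \<open>f x = y\<close> iff \<open>A m = x\<close> and \<open>B m = y\<close> for some \<open>m\<close> in a set decidable in K.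
  Since K computes the codes of pairs, lists and finite sets, the graph of every member of K is then
  \<open>E ` M\<close> for a total \<open>E\<close> and a decidable \<open>M\<close> in K.

  If \<open>f\<close> is in K, the universal function gives indices \<open>e\<close>, \<open>c\<close> with \<open>F(e, m) = E m\<close> and
  \<open>F(c, m) = [m \<in> M]\<close>; so \<open>v\<close> is in the graph of \<open>f\<close> iff for some \<open>m\<close> the two points
  \<open>(e, m, v)\<close>, \<open>(c, m, 1)\<close> lie in the graph of \<open>F\<close>, which is an enumeration reduction along a
  recursively enumerable set. Conversely, given a reduction along \<open>W\<close>, enumerate \<open>W\<close> and the graph of
  \<open>F\<close> in the same way: \<open>f xs = y\<close> iff some code of \<open>(y, u, m, b)\<close> says that \<open>m\<close> enumerates the pair of
  the graph point and \<open>u\<close> into \<open>W\<close>, and that every element of \<open>D_u\<close> is enumerated into the graph of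
  \<open>F\<close> at an index below \<open>b\<close>. This is decidable in K, so \<open>f\<close> is obtained by a \<open>\<mu>\<close>-search in K.
\<close>

section \<open>Codes of pairs, lists and finite sets\<close>

text \<open>The disjunct \<open>b = 0\<close> makes the search return \<open>0\<close>, matching \<open>a div 0 = 0\<close>.\<close>
lemma div_eq_LEAST: "(a::nat) div b = (LEAST n. a < b * Suc n \<or> b = 0)"
proof (cases "b = 0")
  case False
  show ?thesis
  proof (rule Least_equality[symmetric])
    show "a < b * Suc (a div b) \<or> b = 0"
      using False by (metis div_less_iff_less_mult mult.commute lessI zero_less_iff_neq_zero)
    show "a div b \<le> n" if "a < b * Suc n \<or> b = 0" for n
      using that False by (metis less_Suc_eq_le less_mult_imp_div_less mult.commute)
  qed
qed simp

lemma prod_decode_eq_LEAST: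
  "prod_decode n =
    (LEAST a. \<exists>b<Suc n. prod_encode (a, b) = n, LEAST b. \<exists>a<Suc n. prod_encode (a, b) = n)"
proof -
  obtain a b where ab: "prod_decode n = (a, b)" by fastforce
  then have n: "n = prod_encode (a, b)" by (metis prod_decode_inverse)
  have "a < Suc n" "b < Suc n" using le_prod_encode_1 le_prod_encode_2 n by (simp_all add: le_imp_less_Suc)
  then have "(LEAST a'. \<exists>b'<Suc n. prod_encode (a', b') = n) = a"
    and "(LEAST b'. \<exists>a'<Suc n. prod_encode (a', b') = n) = b"
    using n by (auto intro!: Least_equality)
  then show ?thesis using ab by simp
qed

definition code_hd :: "nat \<Rightarrow> nat" where
  "code_hd z = (if z = 0 then 0 else fst (prod_decode (z - 1)))"

definition code_tl :: "nat \<Rightarrow> nat" where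
  "code_tl z = (if z = 0 then 0 else snd (prod_decode (z - 1)))"

definition code_nth :: "nat \<Rightarrow> nat \<Rightarrow> nat" where
  "code_nth i z = code_hd ((code_tl ^^ i) z)"

lemma code_nth_list_encode: "i < length xs \<Longrightarrow> code_nth i (list_encode xs) = xs ! i"
proof (induction xs arbitrary: i)
  case (Cons x xs)
  then show ?case
    by (cases i) (simp_all add: code_nth_def code_hd_def code_tl_def funpow_Suc_right del: funpow.simps)
qed simp

lemma map_code_nth_list_encode: "length xs = k \<Longrightarrow> map (\<lambda>i. code_nth i (list_encode xs)) [0..<k] = xs"
  by (auto intro: nth_equalityI simp: code_nth_list_encode)

lemma list_encode_mem_graph_iff:
  "length xs = k \<Longrightarrow> list_encode (xs @ [y]) \<in> graph k f \<longleftrightarrow> f xs = Some y"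
  by (auto simp: graph_def list_encode_eq)

lemma set_encode_doubleton: "set_encode {p, q} = 2 ^ p + (if q = p then 0 else 2 ^ q)"
  by (cases "q = p") simp_all

lemma mem_set_decode_less: "v \<in> set_decode u \<Longrightarrow> v < u"
proof -
  assume "v \<in> set_decode u"
  then have "set_decode (2 ^ v) \<subseteq> set_decode u" using set_encode_inverse[of "{v}"] by simp
  then have "2 ^ v \<le> u" by (rule subset_decode_imp_le)
  then show "v < u" using less_exp[of v] by linarith
qed

lemma finite_bounded_witnesses:
  fixes P :: "'a \<Rightarrow> nat \<Rightarrow> bool"
  assumes "finite A" "\<forall>v\<in>A. \<exists>n. P v n"
  shows "\<exists>b. \<forall>v\<in>A. \<exists>n<b. P v n"
proof -
  obtain g where g: "\<forall>v\<in>A. P v (g v)" using bchoice[OF assms(2)] by blast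
  obtain b where "\<forall>n\<in>g ` A. n < b" using assms(1) finite_nat_set_iff_bounded by blast
  then show ?thesis using g by blast
qed

lemma length_eq_2_iff: "length xs = 2 \<longleftrightarrow> (\<exists>a b. xs = [a, b])"
  by (auto simp: length_Suc_conv numeral_2_eq_2)

section \<open>Recursively closed classes of partial functions\<close>

definition total_pfun :: "nat \<Rightarrow> (nat list \<Rightarrow> nat) \<Rightarrow> pfun" where
  "total_pfun k f = (\<lambda>xs. if length xs = k then Some (f xs) else None)"

fun total_prec :: "(nat list \<Rightarrow> nat) \<Rightarrow> (nat list \<Rightarrow> nat) \<Rightarrow> nat \<Rightarrow> nat list \<Rightarrow> nat" where
  "total_prec g h 0 ys = g ys"
| "total_prec g h (Suc n) ys = h (n # total_prec g h n ys # ys)"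

locale recursively_closed =
  fixes S :: "(nat \<times> pfun) set"
  assumes zero_closed: "(1, total_pfun 1 (\<lambda>_. 0)) \<in> S"
    and succ_closed: "(1, total_pfun 1 (\<lambda>xs. Suc (hd xs))) \<in> S"
    and proj_closed: "1 \<le> k \<Longrightarrow> i < k \<Longrightarrow> (k, total_pfun k (\<lambda>xs. xs ! i)) \<in> S"
    and pcomp_closed: "1 \<le> m \<Longrightarrow> 1 \<le> k \<Longrightarrow> (m, g) \<in> S \<Longrightarrow> length hs = m
      \<Longrightarrow> \<forall>h\<in>set hs. (k, h) \<in> S \<Longrightarrow> (k, pcomp k g hs) \<in> S"
    and prec_closed: "1 \<le> k \<Longrightarrow> (k, g) \<in> S \<Longrightarrow> (Suc (Suc k), h) \<in> S \<Longrightarrow> (Suc k, prec g h) \<in> S"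
    and pmu_closed: "1 \<le> k \<Longrightarrow> (Suc k, g) \<in> S \<Longrightarrow> (k, pmu g) \<in> S"
begin

definition total_in :: "nat \<Rightarrow> (nat list \<Rightarrow> nat) \<Rightarrow> bool" where
  "total_in k f \<longleftrightarrow> (k, total_pfun k f) \<in> S"

definition decidable_in :: "nat \<Rightarrow> (nat list \<Rightarrow> bool) \<Rightarrow> bool" where
  "decidable_in k P \<longleftrightarrow> total_in k (\<lambda>xs. of_bool (P xs))"

lemma total_in_cong:
  assumes "total_in k f" and "\<And>xs. length xs = k \<Longrightarrow> f xs = g xs"
  shows "total_in k g"
proof -
  have "total_pfun k f = total_pfun k g" using assms(2) by (auto simp: total_pfun_def)
  with assms(1) show ?thesis by (simp add: total_in_def)
qed

lemma total_in_proj: "1 \<le> k \<Longrightarrow> i < k \<Longrightarrow> total_in k (\<lambda>xs. xs ! i)"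
  using proj_closed by (simp add: total_in_def)

lemma total_in_comp:
  assumes "1 \<le> m" "1 \<le> k" "total_in m g" "length hs = m" "\<forall>h\<in>set hs. total_in k h"
  shows "total_in k (\<lambda>xs. g (map (\<lambda>h. h xs) hs))"
proof -
  have "(k, pcomp k (total_pfun m g) (map (total_pfun k) hs)) \<in> S"
    using assms by (intro pcomp_closed) (auto simp: total_in_def)
  moreover have "pcomp k (total_pfun m g) (map (total_pfun k) hs) = total_pfun k (\<lambda>xs. g (map (\<lambda>h. h xs) hs))"
    using assms(4) by (auto simp: pcomp_def total_pfun_def fun_eq_iff comp_def)
  ultimately show ?thesis by (simp add: total_in_def)
qed

lemma total_in_comp1: "total_in 1 g \<Longrightarrow> 1 \<le> k \<Longrightarrow> total_in k a \<Longrightarrow> total_in k (\<lambda>xs. g [a xs])"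
  using total_in_comp[of 1 k g "[a]"] by simp

lemma total_in_comp2:
  "total_in 2 g \<Longrightarrow> 1 \<le> k \<Longrightarrow> total_in k a \<Longrightarrow> total_in k b \<Longrightarrow> total_in k (\<lambda>xs. g [a xs, b xs])"
  using total_in_comp[of 2 k g "[a, b]"] by simp

lemma total_in_unary:
  "total_in 1 (\<lambda>xs. g (hd xs)) \<Longrightarrow> 1 \<le> k \<Longrightarrow> total_in k a \<Longrightarrow> total_in k (\<lambda>xs. g (a xs))"
  using total_in_comp1[of "\<lambda>xs. g (hd xs)" k a] by simp

lemma total_in_partial_comp:
  assumes "(1, g) \<in> S" "1 \<le> k" "total_in k a" "\<And>xs. length xs = k \<Longrightarrow> g [a xs] \<noteq> None"
  shows "total_in k (\<lambda>xs. the (g [a xs]))"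
proof -
  have "(k, pcomp k g [total_pfun k a]) \<in> S"
    using assms by (intro pcomp_closed) (auto simp: total_in_def)
  moreover have "pcomp k g [total_pfun k a] = total_pfun k (\<lambda>xs. the (g [a xs]))"
    using assms(4) by (auto simp: pcomp_def total_pfun_def fun_eq_iff)
  ultimately show ?thesis by (simp add: total_in_def)
qed

lemma total_in_prec:
  assumes "1 \<le> k" "total_in k g" "total_in (Suc (Suc k)) h"
  shows "total_in (Suc k) (\<lambda>xs. total_prec g h (hd xs) (tl xs))"
proof -
  have "(Suc k, prec (total_pfun k g) (total_pfun (Suc (Suc k)) h)) \<in> S"
    using assms by (intro prec_closed) (auto simp: total_in_def)
  moreover have "prec_aux (total_pfun k g) (total_pfun (Suc (Suc k)) h) n ys
      = (if length ys = k then Some (total_prec g h n ys) else None)" for n ys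
    by (induction n) (auto simp: total_pfun_def)
  then have "prec (total_pfun k g) (total_pfun (Suc (Suc k)) h) = total_pfun (Suc k) (\<lambda>xs. total_prec g h (hd xs) (tl xs))"
    by (auto simp: fun_eq_iff prec_def total_pfun_def split: list.split)
  ultimately show ?thesis by (simp add: total_in_def)
qed

lemma total_in_binary_prec:
  "total_in 1 g \<Longrightarrow> total_in 3 h \<Longrightarrow> total_in 2 (\<lambda>xs. total_prec g h (hd xs) (tl xs))"
  using total_in_prec[of 1 g h] unfolding numeral_2_eq_2 numeral_3_eq_3 by simp

lemma total_in_pmu:
  assumes "1 \<le> k" "total_in (Suc k) g" "\<And>xs. length xs = k \<Longrightarrow> \<exists>n. g (n # xs) = 0"
  shows "total_in k (\<lambda>xs. LEAST n. g (n # xs) = 0)"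
proof -
  have "(k, pmu (total_pfun (Suc k) g)) \<in> S"
    using assms by (intro pmu_closed) (auto simp: total_in_def)
  moreover have "pmu (total_pfun (Suc k) g) = total_pfun k (\<lambda>xs. LEAST n. g (n # xs) = 0)"
    using assms(3) by (auto simp: fun_eq_iff pmu_def total_pfun_def)
  ultimately show ?thesis by (simp add: total_in_def)
qed

lemma total_in_const: "1 \<le> k \<Longrightarrow> total_in k (\<lambda>_. c)"
proof (induction c)
  case 0
  have "total_in k (\<lambda>xs. (\<lambda>_. 0) [xs ! 0])"
    by (rule total_in_comp1) (use 0 zero_closed total_in_proj[of k 0] in \<open>auto simp: total_in_def\<close>)
  then show ?case by simp
next
  case (Suc c)
  show ?case
    using total_in_comp1[of "\<lambda>xs. Suc (hd xs)" k "\<lambda>_. c"] Suc succ_closed by (simp add: total_in_def)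
qed

lemma total_in_Suc: "1 \<le> k \<Longrightarrow> total_in k a \<Longrightarrow> total_in k (\<lambda>xs. Suc (a xs))"
  using total_in_comp1[of "\<lambda>xs. Suc (hd xs)" k a] succ_closed by (simp add: total_in_def)

lemma total_in_hd:
  assumes "1 \<le> k"
  shows "total_in k hd"
proof (rule total_in_cong)
  show "total_in k (\<lambda>xs. xs ! 0)" using assms by (simp add: total_in_proj)
  show "xs ! 0 = hd xs" if "length xs = k" for xs using assms that by (cases xs) auto
qed

lemma total_in_tl:
  assumes "1 \<le> k" "total_in k a"
  shows "total_in (Suc k) (\<lambda>zs. a (tl zs))"
proof -
  have "total_in (Suc k) (\<lambda>zs. a (map (\<lambda>h. h zs) (map (\<lambda>i zs. zs ! Suc i) [0..<k])))"
    using assms by (intro total_in_comp) (auto intro: total_in_proj)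
  then show ?thesis
    by (rule total_in_cong) (auto intro!: arg_cong[where f=a] nth_equalityI simp: nth_tl)
qed

lemma total_in_add:
  assumes "1 \<le> k" "total_in k a" "total_in k b"
  shows "total_in k (\<lambda>xs. a xs + b xs)"
proof -
  have "total_in 2 (\<lambda>xs. total_prec hd (\<lambda>zs. Suc (zs ! 1)) (hd xs) (tl xs))"
    by (intro total_in_binary_prec total_in_Suc total_in_proj total_in_hd) simp_all
  then have "total_in 2 (\<lambda>xs. xs ! 0 + xs ! 1)"
    by (rule total_in_cong) (clarsimp simp: length_eq_2_iff, induct_tac a, auto)
  from total_in_comp2[OF this assms] show ?thesis by simp
qed

lemma total_in_mult:
  assumes "1 \<le> k" "total_in k a" "total_in k b"
  shows "total_in k (\<lambda>xs. a xs * b xs)"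
proof -
  have "total_in 2 (\<lambda>xs. total_prec (\<lambda>_. 0) (\<lambda>zs. zs ! 1 + zs ! 2) (hd xs) (tl xs))"
    by (intro total_in_binary_prec total_in_add total_in_proj total_in_const) simp_all
  then have "total_in 2 (\<lambda>xs. xs ! 0 * xs ! 1)"
    by (rule total_in_cong) (clarsimp simp: length_eq_2_iff, induct_tac a, auto)
  from total_in_comp2[OF this assms] show ?thesis by simp
qed

lemma total_in_pred:
  assumes "1 \<le> k" "total_in k a"
  shows "total_in k (\<lambda>xs. a xs - 1)"
proof -
  have "total_in 2 (\<lambda>xs. total_prec (\<lambda>_. 0) hd (hd xs) (tl xs))"
    by (intro total_in_binary_prec total_in_hd total_in_const) simp_all
  then have "total_in 2 (\<lambda>xs. xs ! 0 - 1)"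
    by (rule total_in_cong) (clarsimp simp: length_eq_2_iff, induct_tac a, auto)
  from total_in_comp2[OF this assms assms(2)] show ?thesis by simp
qed

lemma total_in_diff:
  assumes "1 \<le> k" "total_in k a" "total_in k b"
  shows "total_in k (\<lambda>xs. a xs - b xs)"
proof -
  have "total_in 2 (\<lambda>xs. total_prec hd (\<lambda>zs. zs ! 1 - 1) (hd xs) (tl xs))"
    by (intro total_in_binary_prec total_in_pred total_in_proj total_in_hd) simp_all
  then have "total_in 2 (\<lambda>xs. xs ! 1 - xs ! 0)"
    by (rule total_in_cong) (clarsimp simp: length_eq_2_iff, induct_tac a, auto)
  from total_in_comp2[OF this assms(1,3,2)] show ?thesis by simp
qed

lemma total_in_power:
  assumes "1 \<le> k" "total_in k a" "total_in k b"
  shows "total_in k (\<lambda>xs. a xs ^ b xs)"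
proof -
  have "total_in 2 (\<lambda>xs. total_prec (\<lambda>_. 1) (\<lambda>zs. zs ! 1 * zs ! 2) (hd xs) (tl xs))"
    by (intro total_in_binary_prec total_in_mult total_in_proj total_in_const) simp_all
  then have "total_in 2 (\<lambda>xs. xs ! 1 ^ xs ! 0)"
    by (rule total_in_cong) (clarsimp simp: length_eq_2_iff, induct_tac a, auto)
  from total_in_comp2[OF this assms(1,3,2)] show ?thesis by simp
qed

lemma decidable_in_cong:
  assumes "decidable_in k P" "\<And>xs. length xs = k \<Longrightarrow> P xs = Q xs"
  shows "decidable_in k Q"
  using total_in_cong[of k "\<lambda>xs. of_bool (P xs)" "\<lambda>xs. of_bool (Q xs)"] assms
  unfolding decidable_in_def by simp

lemma decidable_in_unary:
  "decidable_in 1 (\<lambda>xs. P (hd xs)) \<Longrightarrow> 1 \<le> k \<Longrightarrow> total_in k a \<Longrightarrow> decidable_in k (\<lambda>xs. P (a xs))"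
  unfolding decidable_in_def by (rule total_in_unary)

lemma decidable_in_less:
  assumes "1 \<le> k" "total_in k a" "total_in k b"
  shows "decidable_in k (\<lambda>xs. a xs < b xs)"
  unfolding decidable_in_def
  by (rule total_in_cong[where f="\<lambda>xs. 1 - (1 - (b xs - a xs))"]) (auto intro!: total_in_diff total_in_const assms)

lemma decidable_in_eq:
  assumes "1 \<le> k" "total_in k a" "total_in k b"
  shows "decidable_in k (\<lambda>xs. a xs = b xs)"
  unfolding decidable_in_def
  by (rule total_in_cong[where f="\<lambda>xs. 1 - ((a xs - b xs) + (b xs - a xs))"])
    (auto intro!: total_in_diff total_in_add total_in_const assms)

lemma decidable_in_not:
  assumes "1 \<le> k" "decidable_in k P"
  shows "decidable_in k (\<lambda>xs. \<not> P xs)"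
proof -
  have "total_in k (\<lambda>xs. 1 - of_bool (P xs))"
    using assms by (intro total_in_diff total_in_const) (simp_all add: decidable_in_def)
  then show ?thesis unfolding decidable_in_def by (rule total_in_cong) simp
qed

lemma decidable_in_conj:
  assumes "1 \<le> k" "decidable_in k P" "decidable_in k Q"
  shows "decidable_in k (\<lambda>xs. P xs \<and> Q xs)"
proof -
  have "total_in k (\<lambda>xs. of_bool (P xs) * of_bool (Q xs))"
    using assms by (intro total_in_mult) (simp_all add: decidable_in_def)
  then show ?thesis unfolding decidable_in_def by (rule total_in_cong) simp
qed

lemma decidable_in_disj:
  assumes "1 \<le> k" "decidable_in k P" "decidable_in k Q"
  shows "decidable_in k (\<lambda>xs. P xs \<or> Q xs)"
proof -
  have "decidable_in k (\<lambda>xs. \<not> (\<not> P xs \<and> \<not> Q xs))"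
    by (intro decidable_in_not decidable_in_conj assms)
  then show ?thesis by (rule decidable_in_cong) simp
qed

lemma decidable_in_imp:
  assumes "1 \<le> k" "decidable_in k P" "decidable_in k Q"
  shows "decidable_in k (\<lambda>xs. P xs \<longrightarrow> Q xs)"
proof -
  have "decidable_in k (\<lambda>xs. \<not> P xs \<or> Q xs)"
    by (intro decidable_in_not decidable_in_disj assms)
  then show ?thesis by (rule decidable_in_cong) simp
qed

lemma total_in_If:
  assumes "1 \<le> k" "decidable_in k P" "total_in k a" "total_in k b"
  shows "total_in k (\<lambda>xs. if P xs then a xs else b xs)"
proof (rule total_in_cong)
  show "total_in k (\<lambda>xs. of_bool (P xs) * a xs + of_bool (\<not> P xs) * b xs)"
    using assms decidable_in_not[OF assms(1,2)]
    by (intro total_in_add total_in_mult) (simp_all add: decidable_in_def)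
qed simp

lemma total_in_LEAST:
  assumes "1 \<le> k" "decidable_in (Suc k) (\<lambda>zs. P (hd zs) (tl zs))"
    and "\<And>xs. length xs = k \<Longrightarrow> \<exists>n. P n xs"
  shows "total_in k (\<lambda>xs. LEAST n. P n xs)"
proof -
  have "total_in (Suc k) (\<lambda>zs. of_bool (\<not> P (hd zs) (tl zs)))"
    using decidable_in_not[OF _ assms(2)] by (simp add: decidable_in_def)
  from total_in_pmu[OF assms(1) this] show ?thesis using assms(3) by simp
qed

lemma decidable_in_bex:
  assumes "1 \<le> k" "total_in k b" "decidable_in (Suc k) (\<lambda>zs. P (hd zs) (tl zs))"
  shows "decidable_in k (\<lambda>xs. \<exists>m<b xs. P m xs)"
proof -
  let ?L = "\<lambda>xs. LEAST n. n = b xs \<or> P n xs"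
  have "total_in k ?L"
    by (rule total_in_LEAST) (use assms in \<open>auto intro!: decidable_in_disj decidable_in_eq total_in_hd total_in_tl\<close>)
  then have "decidable_in k (\<lambda>xs. ?L xs < b xs)"
    by (intro decidable_in_less assms)
  moreover have "?L xs < b xs \<longleftrightarrow> (\<exists>m<b xs. P m xs)" for xs
  proof
    assume "?L xs < b xs"
    moreover have "?L xs = b xs \<or> P (?L xs) xs" by (rule LeastI[of _ "b xs"]) simp
    ultimately show "\<exists>m<b xs. P m xs" by auto
  next
    assume "\<exists>m<b xs. P m xs"
    then obtain m where "m < b xs" "P m xs" by blast
    then show "?L xs < b xs" using Least_le[of "\<lambda>n. n = b xs \<or> P n xs" m] by simp
  qed
  ultimately show ?thesis by (rule decidable_in_cong)
qed

lemma decidable_in_ball: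
  assumes "1 \<le> k" "total_in k b" "decidable_in (Suc k) (\<lambda>zs. P (hd zs) (tl zs))"
  shows "decidable_in k (\<lambda>xs. \<forall>m<b xs. P m xs)"
proof -
  have "decidable_in k (\<lambda>xs. \<not> (\<exists>m<b xs. \<not> P m xs))"
    using assms by (intro decidable_in_not decidable_in_bex) auto
  then show ?thesis by (rule decidable_in_cong) auto
qed

lemma total_in_div:
  assumes "1 \<le> k" "total_in k a" "total_in k b"
  shows "total_in k (\<lambda>xs. a xs div b xs)"
  unfolding div_eq_LEAST
proof (rule total_in_LEAST)
  show "decidable_in (Suc k) (\<lambda>zs. a (tl zs) < b (tl zs) * Suc (hd zs) \<or> b (tl zs) = 0)"
    using assms
    by (intro decidable_in_disj decidable_in_less decidable_in_eq total_in_mult total_in_Suc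
        total_in_tl total_in_hd total_in_const) simp_all
  show "\<exists>n. a xs < b xs * Suc n \<or> b xs = 0" for xs
    by (rule exI[of _ "a xs"]) (cases "b xs", auto)
qed (use assms in simp)

lemma total_in_mod:
  assumes "1 \<le> k" "total_in k a" "total_in k b"
  shows "total_in k (\<lambda>xs. a xs mod b xs)"
proof -
  have "total_in k (\<lambda>xs. a xs - b xs * (a xs div b xs))"
    using assms by (intro total_in_diff total_in_mult total_in_div)
  then show ?thesis by (rule total_in_cong) (simp add: minus_mult_div_eq_mod)
qed

lemma decidable_in_mem_set_decode:
  assumes "1 \<le> k" "total_in k a" "total_in k b"
  shows "decidable_in k (\<lambda>xs. a xs \<in> set_decode (b xs))"
proof -
  have "decidable_in k (\<lambda>xs. b xs div 2 ^ a xs mod 2 = 1)"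
    using assms by (intro decidable_in_eq total_in_mod total_in_div total_in_power total_in_const)
  then show ?thesis by (rule decidable_in_cong) (simp add: set_decode_def odd_iff_mod_2_eq_one)
qed

lemma total_in_prod_encode:
  assumes "1 \<le> k" "total_in k a" "total_in k b"
  shows "total_in k (\<lambda>xs. prod_encode (a xs, b xs))"
proof -
  have "total_in k (\<lambda>xs. (a xs + b xs) * Suc (a xs + b xs) div 2 + a xs)"
    using assms by (intro total_in_add total_in_div total_in_mult total_in_Suc total_in_const)
  then show ?thesis by (rule total_in_cong) (simp add: prod_encode_def triangle_def)
qed

lemma total_in_prod_decode:
  assumes "1 \<le> k" "total_in k a"
  shows "total_in k (\<lambda>xs. fst (prod_decode (a xs)))" and "total_in k (\<lambda>xs. snd (prod_decode (a xs)))"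
proof -
  have "fst (prod_decode n) < Suc n \<and> snd (prod_decode n) < Suc n" for n
    by (metis le_imp_less_Suc le_prod_encode_1 le_prod_encode_2 prod.collapse prod_decode_inverse)
  then have "\<exists>c. \<exists>d<Suc n. prod_encode (c, d) = n" and "\<exists>d. \<exists>c<Suc n. prod_encode (c, d) = n" for n
    by (metis prod.collapse prod_decode_inverse)+
  then show "total_in k (\<lambda>xs. fst (prod_decode (a xs)))" and "total_in k (\<lambda>xs. snd (prod_decode (a xs)))"
    unfolding prod_decode_eq_LEAST fst_conv snd_conv using assms
    by (auto intro!: total_in_LEAST decidable_in_bex decidable_in_eq total_in_prod_encode total_in_Suc
        total_in_hd total_in_tl)
qed

lemma total_in_code_hd: "1 \<le> k \<Longrightarrow> total_in k a \<Longrightarrow> total_in k (\<lambda>xs. code_hd (a xs))"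
  unfolding code_hd_def by (intro total_in_If decidable_in_eq total_in_prod_decode total_in_pred total_in_const)

lemma total_in_code_tl: "1 \<le> k \<Longrightarrow> total_in k a \<Longrightarrow> total_in k (\<lambda>xs. code_tl (a xs))"
  unfolding code_tl_def by (intro total_in_If decidable_in_eq total_in_prod_decode total_in_pred total_in_const)

lemma total_in_code_nth:
  assumes "1 \<le> k" "total_in k a"
  shows "total_in k (\<lambda>xs. code_nth i (a xs))"
proof -
  have "total_in k (\<lambda>xs. (code_tl ^^ i) (a xs))"
    by (induction i) (auto intro: total_in_code_tl assms)
  then show ?thesis unfolding code_nth_def using assms by (intro total_in_code_hd)
qed

lemma total_in_list_encode_Cons:
  assumes "1 \<le> k" "total_in k a" "total_in k (\<lambda>xs. list_encode (l xs))"
  shows "total_in k (\<lambda>xs. list_encode (a xs # l xs))"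
  using total_in_Suc[OF assms(1) total_in_prod_encode[OF assms]] by simp

lemma total_in_list_encode_map_append:
  assumes "1 \<le> k" "\<forall>i\<in>set is. total_in k (h i)" "total_in k (\<lambda>xs. list_encode (l xs))"
  shows "total_in k (\<lambda>xs. list_encode (map (\<lambda>i. h i xs) is @ l xs))"
  using assms(2) by (induction "is") (auto simp del: list_encode.simps intro!: total_in_list_encode_Cons assms)

lemma total_in_list_encode_tl_append:
  assumes "1 \<le> k" "total_in (Suc k) a"
  shows "total_in (Suc k) (\<lambda>zs. list_encode (tl zs @ [a zs]))"
proof -
  have tl: "map (\<lambda>i. zs ! Suc i) [0..<k] = tl zs" if "length zs = Suc k" for zs
    using that by (intro nth_equalityI) (auto simp: nth_tl)
  have "total_in (Suc k) (\<lambda>zs. list_encode (map (\<lambda>i. zs ! Suc i) [0..<k] @ [a zs]))"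
    using assms by (intro total_in_list_encode_map_append total_in_list_encode_Cons total_in_proj
        total_in_const ballI) auto
  then show ?thesis by (rule total_in_cong) (simp add: tl)
qed

lemma mem_if_graph_by_search:
  assumes "1 \<le> k" "has_arity k f"
    and R: "decidable_in (Suc k) (\<lambda>zs. R (tl zs) (hd zs))"
    and out: "total_in 1 (\<lambda>xs. out (hd xs))"
    and graph: "\<And>xs y. length xs = k \<Longrightarrow> f xs = Some y \<longleftrightarrow> (\<exists>s. R xs s \<and> out s = y)"
  shows "(k, f) \<in> S"
proof -
  define search where "search = pmu (total_pfun (Suc k) (\<lambda>zs. of_bool (\<not> R (tl zs) (hd zs))))"
  have "(k, search) \<in> S"
    unfolding search_def using decidable_in_not[OF _ R] assms(1)
    by (intro pmu_closed) (simp_all add: decidable_in_def total_in_def)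
  then have "(k, pcomp k (total_pfun 1 (\<lambda>xs. out (hd xs))) [search]) \<in> S"
    using out assms(1) by (intro pcomp_closed) (simp_all add: total_in_def)
  moreover have "pcomp k (total_pfun 1 (\<lambda>xs. out (hd xs))) [search] = f"
  proof
    fix xs
    show "pcomp k (total_pfun 1 (\<lambda>xs. out (hd xs))) [search] xs = f xs"
    proof (cases "length xs = k")
      case len: True
      then have search: "search xs = (if \<exists>s. R xs s then Some (LEAST s. R xs s) else None)"
        by (simp add: search_def pmu_def total_pfun_def)
      show ?thesis
      proof (cases "\<exists>s. R xs s")
        case True
        then have "R xs (LEAST s. R xs s)" by (rule LeastI_ex)
        then have "f xs = Some (out (LEAST s. R xs s))" using graph[OF len] by blast
        then show ?thesis using len True search by (simp add: pcomp_def total_pfun_def)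
      next
        case False
        then have "f xs = None" using graph[OF len] by (meson not_Some_eq)
        then show ?thesis using len False search by (simp add: pcomp_def)
      qed
    next
      case False
      then show ?thesis using assms(2) by (simp add: pcomp_def has_arity_def)
    qed
  qed
  ultimately show ?thesis by simp
qed

end

interpretation partrec_class: recursively_closed "{(k, f). 1 \<le> k \<and> partrec k f}"
  by unfold_locales
    (insert partrec.zero partrec.succ, auto simp: total_pfun_def
      intro: partrec.intros partrec.compose[of m _ _ k for m k] dest: partrec.prim_rec partrec.minimize)

lemma re_set_range:
  assumes "partrec_class.total_in 1 (\<lambda>xs. R (hd xs))"
  shows "re_set (range R)"
proof -
  define g where "g = pmu (total_pfun 2 (\<lambda>zs. of_bool (R (zs ! 0) \<noteq> zs ! 1)))"
  have "partrec_class.total_in 2 (\<lambda>zs. R (zs ! 0))"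
    by (rule partrec_class.total_in_unary[OF assms _ partrec_class.total_in_proj]) simp_all
  then have "partrec_class.decidable_in 2 (\<lambda>zs. R (zs ! 0) \<noteq> zs ! 1)"
    by (intro partrec_class.decidable_in_not partrec_class.decidable_in_eq partrec_class.total_in_proj) simp_all
  then have "partrec 2 (total_pfun 2 (\<lambda>zs. of_bool (R (zs ! 0) \<noteq> zs ! 1)))"
    unfolding partrec_class.decidable_in_def partrec_class.total_in_def by simp
  then have "partrec 1 g"
    unfolding g_def using partrec.minimize[of 1] by (simp add: numeral_2_eq_2)
  moreover have "range R = {x. g [x] \<noteq> None}"
    by (auto simp: g_def pmu_def total_pfun_def)
  ultimately show ?thesis unfolding re_set_def by blast
qed

section \<open>Classes with a universal function\<close>

lemma list_encode_pair_mem_range_iff: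
  "list_encode [v, u] \<in> range (\<lambda>p. list_encode [fst (prod_decode p), g (fst (prod_decode p)) (snd (prod_decode p))])
    \<longleftrightarrow> (\<exists>m. u = g v m)" (is "_ \<in> range ?G \<longleftrightarrow> _")
proof
  assume "list_encode [v, u] \<in> range ?G"
  then obtain p where "list_encode [v, u] = ?G p" by blast
  then show "\<exists>m. u = g v m" unfolding list_encode_eq by blast
next
  assume "\<exists>m. u = g v m"
  then obtain m where "u = g v m" ..
  then have "list_encode [v, u] = ?G (prod_encode (v, m))" by (simp del: list_encode.simps)
  then show "list_encode [v, u] \<in> range ?G" by (rule range_eqI)
qed

lemma enum_reducible_image_if_indices:
  assumes e: "\<And>m. F [e, m] = Some (E m)" and c: "\<And>m. F [c, m] = Some (of_bool (M m))"
  shows "enum_reducible (E ` Collect M) (graph 2 F)"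
proof -
  define witness where "witness v m = set_encode {list_encode [c, m, 1], list_encode [e, m, v]}" for v m
  have witness: "set_decode (witness v m) \<subseteq> graph 2 F \<longleftrightarrow> M m \<and> E m = v" for v m
    using list_encode_mem_graph_iff[of "[c, m]" 2 1 F] list_encode_mem_graph_iff[of "[e, m]" 2 v F]
    by (simp add: witness_def c e del: list_encode.simps)
  define W where
    "W = range (\<lambda>p. list_encode [fst (prod_decode p), witness (fst (prod_decode p)) (snd (prod_decode p))])"
  have "partrec_class.total_in 1 (\<lambda>xs. list_encode [fst (prod_decode (hd xs)),
      witness (fst (prod_decode (hd xs))) (snd (prod_decode (hd xs)))])"
    unfolding witness_def set_encode_doubleton
    by (intro partrec_class.total_in_list_encode_Cons partrec_class.total_in_add
        partrec_class.total_in_power partrec_class.total_in_If partrec_class.decidable_in_eq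
        partrec_class.total_in_prod_decode partrec_class.total_in_hd partrec_class.total_in_const) simp_all
  then have "re_set W" unfolding W_def by (rule re_set_range)
  moreover have "v \<in> E ` Collect M \<longleftrightarrow> (\<exists>u. list_encode [v, u] \<in> W \<and> set_decode u \<subseteq> graph 2 F)" for v
  proof -
    have "v \<in> E ` Collect M \<longleftrightarrow> (\<exists>m. set_decode (witness v m) \<subseteq> graph 2 F)"
      using witness by auto
    also have "\<dots> \<longleftrightarrow> (\<exists>u. list_encode [v, u] \<in> W \<and> set_decode u \<subseteq> graph 2 F)"
      unfolding W_def list_encode_pair_mem_range_iff by auto
    finally show ?thesis .
  qed
  ultimately show ?thesis unfolding enum_reducible_def by blast
qed

text \<open>A witness \<open>s\<close> codes the list \<open>[y, u, m, b]\<close>: \<open>m\<close> enumerates the code of the graph point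
  \<open>xs @ [y]\<close> paired with \<open>u\<close>, and \<open>b\<close> bounds indices enumerating the elements of \<open>D_u\<close>.\<close>
definition reduction_witness ::
    "(nat \<Rightarrow> nat) \<Rightarrow> (nat \<Rightarrow> bool) \<Rightarrow> (nat \<Rightarrow> nat) \<Rightarrow> (nat \<Rightarrow> bool) \<Rightarrow> nat list \<Rightarrow> nat \<Rightarrow> bool" where
  "reduction_witness R M E N xs s \<longleftrightarrow> M (code_nth 2 s)
    \<and> R (code_nth 2 s) = list_encode [list_encode (xs @ [code_nth 0 s]), code_nth 1 s]
    \<and> (\<forall>v<code_nth 1 s. v \<in> set_decode (code_nth 1 s) \<longrightarrow> (\<exists>n<code_nth 3 s. N n \<and> E n = v))"

lemma graph_iff_reduction_witness:
  assumes reduction: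
      "\<And>v. v \<in> graph k f \<longleftrightarrow> (\<exists>u. list_encode [v, u] \<in> R ` Collect M \<and> set_decode u \<subseteq> E ` Collect N)"
    and len: "length xs = k"
  shows "f xs = Some y \<longleftrightarrow> (\<exists>s. reduction_witness R M E N xs s \<and> code_nth 0 s = y)"
proof
  assume "f xs = Some y"
  then have "list_encode (xs @ [y]) \<in> graph k f" using list_encode_mem_graph_iff[OF len] by blast
  then obtain u where "list_encode [list_encode (xs @ [y]), u] \<in> R ` Collect M"
    and u: "set_decode u \<subseteq> E ` Collect N"
    using reduction by blast
  then obtain m where m: "M m" "R m = list_encode [list_encode (xs @ [y]), u]"
    by (force simp del: list_encode.simps)
  have "\<forall>v\<in>set_decode u. \<exists>n. N n \<and> E n = v" using u by blast
  then obtain b where b: "\<forall>v\<in>set_decode u. \<exists>n<b. N n \<and> E n = v"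
    using finite_bounded_witnesses[of "set_decode u" "\<lambda>v n. N n \<and> E n = v"] by auto
  define s where "s = list_encode [y, u, m, b]"
  have "code_nth 0 s = y" "code_nth 1 s = u" "code_nth 2 s = m" "code_nth 3 s = b"
    by (simp_all add: s_def code_nth_list_encode del: list_encode.simps)
  then have "reduction_witness R M E N xs s" using m b by (simp add: reduction_witness_def)
  then show "\<exists>s. reduction_witness R M E N xs s \<and> code_nth 0 s = y"
    using \<open>code_nth 0 s = y\<close> by blast
next
  assume "\<exists>s. reduction_witness R M E N xs s \<and> code_nth 0 s = y"
  then obtain s where s: "reduction_witness R M E N xs s" and y: "code_nth 0 s = y" by blast
  then have "M (code_nth 2 s)" "R (code_nth 2 s) = list_encode [list_encode (xs @ [y]), code_nth 1 s]"
    by (simp_all add: reduction_witness_def del: list_encode.simps)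
  then have "list_encode [list_encode (xs @ [y]), code_nth 1 s] \<in> R ` Collect M"
    by (metis image_eqI mem_Collect_eq)
  moreover have "v \<in> E ` Collect N" if "v \<in> set_decode (code_nth 1 s)" for v
  proof -
    have "v < code_nth 1 s" using that by (rule mem_set_decode_less)
    then show ?thesis using that s unfolding reduction_witness_def by blast
  qed
  ultimately have "list_encode (xs @ [y]) \<in> graph k f" using reduction by blast
  then show "f xs = Some y" using list_encode_mem_graph_iff[OF len] by blast
qed

locale universal_class = recursively_closed S for S +
  fixes F :: pfun
  assumes partrec_mem: "1 \<le> k \<Longrightarrow> partrec k f \<Longrightarrow> (k, f) \<in> S"
    and unary_normal_form: "(1, f) \<in> S \<Longrightarrow> \<exists>M \<alpha> \<omega>. (1, \<alpha>) \<in> S \<and> (1, \<omega>) \<in> S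
      \<and> (\<forall>m\<in>M. \<alpha> [m] \<noteq> None \<and> \<omega> [m] \<noteq> None) \<and> (1, total_pfun 1 (\<lambda>xs. of_bool (hd xs \<in> M))) \<in> S
      \<and> (\<forall>x y. f [x] = Some y \<longleftrightarrow> (\<exists>m\<in>M. \<alpha> [m] = Some x \<and> \<omega> [m] = Some y))"
    and universal_mem: "(2, F) \<in> S"
    and universal: "(1, f) \<in> S \<Longrightarrow> \<exists>n. \<forall>x. F [n, x] = f [x]"
begin

lemma unary_total_normal_form:
  assumes "(1, f) \<in> S"
  obtains A B M where "total_in 1 (\<lambda>xs. A (hd xs))" "total_in 1 (\<lambda>xs. B (hd xs))"
    "decidable_in 1 (\<lambda>xs. M (hd xs))" "\<And>x y. f [x] = Some y \<longleftrightarrow> (\<exists>m. M m \<and> A m = x \<and> B m = y)"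
proof -
  obtain M \<alpha> \<omega> where \<alpha>: "(1, \<alpha>) \<in> S" and \<omega>: "(1, \<omega>) \<in> S"
    and dom: "\<forall>m\<in>M. \<alpha> [m] \<noteq> None \<and> \<omega> [m] \<noteq> None"
    and M: "decidable_in 1 (\<lambda>xs. hd xs \<in> M)"
    and f: "\<And>x y. f [x] = Some y \<longleftrightarrow> (\<exists>m\<in>M. \<alpha> [m] = Some x \<and> \<omega> [m] = Some y)"
    using unary_normal_form[OF assms] unfolding decidable_in_def total_in_def by blast
  show ?thesis
  proof (cases "M = {}")
    case True
    show ?thesis
      by (rule that[of "\<lambda>_. 0" "\<lambda>_. 0" "\<lambda>_. False"]) (simp_all add: decidable_in_def total_in_const f True)
  next
    case False
    then obtain m0 where "m0 \<in> M" by auto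
    \<comment> \<open>Outside \<open>M\<close>, redirect \<alpha> and \<omega> to the point \<open>m0 \<in> M\<close>, where they are defined.\<close>
    define r where "r m = (if m \<in> M then m else m0)" for m
    have r: "r m \<in> M" for m using \<open>m0 \<in> M\<close> by (simp add: r_def)
    have "total_in 1 (\<lambda>xs. r (hd xs))"
      unfolding r_def by (intro total_in_If M total_in_hd total_in_const) simp_all
    then have "total_in 1 (\<lambda>xs. the (\<alpha> [r (hd xs)]))" "total_in 1 (\<lambda>xs. the (\<omega> [r (hd xs)]))"
      using dom r by (auto intro!: total_in_partial_comp \<alpha> \<omega>)
    moreover have "f [x] = Some y \<longleftrightarrow> (\<exists>m. m \<in> M \<and> the (\<alpha> [r m]) = x \<and> the (\<omega> [r m]) = y)" for x y
      unfolding f using dom by (force simp: r_def)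
    ultimately show ?thesis using M by (intro that) auto
  qed
qed

lemma universal_index:
  assumes "total_in 1 (\<lambda>xs. A (hd xs))"
  obtains n where "\<And>x. F [n, x] = Some (A x)"
  using universal[of "total_pfun 1 (\<lambda>xs. A (hd xs))"] assms by (auto simp: total_in_def total_pfun_def)

lemma graph_enumerable:
  assumes "1 \<le> k" "(k, f) \<in> S"
  obtains E M where "total_in 1 (\<lambda>xs. E (hd xs))" "decidable_in 1 (\<lambda>xs. M (hd xs))"
    "graph k f = E ` Collect M"
proof -
  define decode where "decode z = map (\<lambda>i. code_nth i z) [0..<k]" for z
  define f' where "f' = pcomp 1 f (map (\<lambda>i. total_pfun 1 (\<lambda>xs. code_nth i (hd xs))) [0..<k])"
  have f'S: "(1, f') \<in> S"
    unfolding f'_def using assms total_in_code_nth[OF _ total_in_hd, of 1]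
    by (intro pcomp_closed) (auto simp: total_in_def)
  have f': "f' [z] = f (decode z)" for z
    by (simp add: f'_def decode_def pcomp_def total_pfun_def comp_def)
  obtain A B M where A: "total_in 1 (\<lambda>xs. A (hd xs))" and B: "total_in 1 (\<lambda>xs. B (hd xs))"
    and M: "decidable_in 1 (\<lambda>xs. M (hd xs))"
    and AB: "\<And>x y. f' [x] = Some y \<longleftrightarrow> (\<exists>m. M m \<and> A m = x \<and> B m = y)"
    using f'S by (rule unary_total_normal_form) blast
  define E where "E m = list_encode (decode (A m) @ [B m])" for m
  have "total_in 1 (\<lambda>xs. E (hd xs))"
    unfolding E_def decode_def using A B
    by (intro total_in_list_encode_map_append total_in_list_encode_Cons total_in_code_nth ballI
        total_in_const) simp_all
  moreover have "graph k f = E ` Collect M"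
  proof
    show "graph k f \<subseteq> E ` Collect M"
    proof
      fix v assume "v \<in> graph k f"
      then obtain xs y where v: "v = list_encode (xs @ [y])" "length xs = k" "f xs = Some y"
        by (auto simp: graph_def)
      then have "f' [list_encode xs] = Some y" by (simp add: f' decode_def map_code_nth_list_encode)
      then obtain m where "M m" "A m = list_encode xs" "B m = y" using AB by blast
      moreover from this have "E m = v" using v by (simp add: E_def decode_def map_code_nth_list_encode)
      ultimately show "v \<in> E ` Collect M" by blast
    qed
    show "E ` Collect M \<subseteq> graph k f"
      using AB by (auto simp: E_def f' list_encode_mem_graph_iff decode_def)
  qed
  ultimately show ?thesis using M that by blast
qed

lemma re_set_enumerable:
  assumes "re_set W"
  obtains R M where "total_in 1 (\<lambda>xs. R (hd xs))" "decidable_in 1 (\<lambda>xs. M (hd xs))" "W = R ` Collect M"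
proof -
  obtain \<phi> where "partrec 1 \<phi>" and W: "W = {x. \<phi> [x] \<noteq> None}"
    using assms unfolding re_set_def by blast
  then have "(1, \<phi>) \<in> S" by (simp add: partrec_mem)
  then obtain A B M where A: "total_in 1 (\<lambda>xs. A (hd xs))" and M: "decidable_in 1 (\<lambda>xs. M (hd xs))"
    and AB: "\<And>x y. \<phi> [x] = Some y \<longleftrightarrow> (\<exists>m. M m \<and> A m = x \<and> B m = y)"
    by (rule unary_total_normal_form) blast
  have "\<phi> [x] \<noteq> None \<longleftrightarrow> (\<exists>m. M m \<and> A m = x)" for x
    using AB[of x] by fastforce
  then have "W = A ` Collect M" unfolding W by auto
  with A M show ?thesis by (rule that)
qed

lemma decidable_in_reduction_witness:
  assumes "1 \<le> k" "total_in 1 (\<lambda>xs. R (hd xs))" "decidable_in 1 (\<lambda>xs. M (hd xs))"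
    "total_in 1 (\<lambda>xs. E (hd xs))" "decidable_in 1 (\<lambda>xs. N (hd xs))"
  shows "decidable_in (Suc k) (\<lambda>zs. reduction_witness R M E N (tl zs) (hd zs))"
  unfolding reduction_witness_def using assms
  by (intro decidable_in_conj decidable_in_eq decidable_in_ball decidable_in_imp decidable_in_bex
      decidable_in_mem_set_decode decidable_in_unary[OF assms(3)] decidable_in_unary[OF assms(5)]
      total_in_unary[OF assms(2)] total_in_unary[OF assms(4)] total_in_list_encode_Cons
      total_in_list_encode_tl_append total_in_code_nth total_in_tl total_in_hd total_in_const) simp_all

lemma rel_partrec_if_mem:
  assumes "1 \<le> k" "(k, f) \<in> S"
  shows "rel_partrec k f 2 F"
proof -
  obtain E M where E: "total_in 1 (\<lambda>xs. E (hd xs))" and M: "decidable_in 1 (\<lambda>xs. M (hd xs))"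
    and graph: "graph k f = E ` Collect M"
    using graph_enumerable[OF assms] .
  obtain e where "\<And>m. F [e, m] = Some (E m)" using universal_index[OF E] by blast
  moreover obtain c where "\<And>m. F [c, m] = Some (of_bool (M m))"
    using universal_index[of "\<lambda>m. of_bool (M m)"] M unfolding decidable_in_def by blast
  ultimately show ?thesis unfolding rel_partrec_def graph by (rule enum_reducible_image_if_indices)
qed

lemma mem_if_rel_partrec:
  assumes "1 \<le> k" "has_arity k f" "rel_partrec k f 2 F"
  shows "(k, f) \<in> S"
proof -
  obtain W where "re_set W"
    and reduction: "\<And>v. v \<in> graph k f \<longleftrightarrow> (\<exists>u. list_encode [v, u] \<in> W \<and> set_decode u \<subseteq> graph 2 F)"
    using assms(3) unfolding rel_partrec_def enum_reducible_def by blast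
  obtain R M where R: "total_in 1 (\<lambda>xs. R (hd xs))" and M: "decidable_in 1 (\<lambda>xs. M (hd xs))"
    and W: "W = R ` Collect M"
    using re_set_enumerable[OF \<open>re_set W\<close>] by blast
  obtain E N where E: "total_in 1 (\<lambda>xs. E (hd xs))" and N: "decidable_in 1 (\<lambda>xs. N (hd xs))"
    and graph_F: "graph 2 F = E ` Collect N"
    using graph_enumerable[of 2 F] universal_mem by auto
  show ?thesis
  proof (rule mem_if_graph_by_search[OF assms(1,2)])
    show "decidable_in (Suc k) (\<lambda>zs. reduction_witness R M E N (tl zs) (hd zs))"
      using assms(1) R M E N by (rule decidable_in_reduction_witness)
    show "total_in 1 (\<lambda>xs. code_nth 0 (hd xs))" by (intro total_in_code_nth total_in_hd) simp_all
    show "f xs = Some y \<longleftrightarrow> (\<exists>s. reduction_witness R M E N xs s \<and> code_nth 0 s = y)"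
      if "length xs = k" for xs y
      using reduction that unfolding W graph_F by (rule graph_iff_reduction_witness)
  qed
qed

end

theorem lemma1:
  fixes K :: "(nat \<times> pfun) set" and F :: pfun
  assumes wf: "\<forall>(k, f)\<in>K. k \<ge> 1 \<and> has_arity k f"
    and rec: "\<forall>k f. k \<ge> 1 \<longrightarrow> partrec k f \<longrightarrow> (k, f) \<in> K"
    and subst: "\<forall>m k g hs. m \<ge> 1 \<longrightarrow> k \<ge> 1 \<longrightarrow> (m, g) \<in> K \<longrightarrow> length hs = m
                  \<longrightarrow> (\<forall>h\<in>set hs. (k, h) \<in> K) \<longrightarrow> (k, pcomp k g hs) \<in> K"
    and primr: "\<forall>k g h. has_arity k g
                  \<longrightarrow> (if k = 0 then (\<exists>c. g = (\<lambda>xs. if xs = [] then Some c else None))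
                      else (k, g) \<in> K)
                  \<longrightarrow> (k + 2, h) \<in> K \<longrightarrow> (k + 1, prec g h) \<in> K"
    and muc: "\<forall>k g. k \<ge> 1 \<longrightarrow> (k + 1, g) \<in> K \<longrightarrow> (k, pmu g) \<in> K"
    and cond2: "\<forall>f. (1, f) \<in> K \<longrightarrow>
                  (\<exists>M \<alpha> \<omega>. (1, \<alpha>) \<in> K \<and> (1, \<omega>) \<in> K
                     \<and> (\<forall>m\<in>M. \<alpha> [m] \<noteq> None \<and> \<omega> [m] \<noteq> None)
                     \<and> (1, (\<lambda>xs. if length xs = 1 then Some (if hd xs \<in> M then 1 else 0) else None)) \<in> K
                     \<and> (\<forall>x y. f [x] = Some y \<longleftrightarrow> (\<exists>m\<in>M. \<alpha> [m] = Some x \<and> \<omega> [m] = Some y)))"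
    and FK: "(2, F) \<in> K"
    and univ: "\<forall>f. (1, f) \<in> K \<longrightarrow> (\<exists>n. \<forall>x. F [n, x] = f [x])"
  shows "\<forall>k f. k \<ge> 1 \<longrightarrow> has_arity k f \<longrightarrow> ((k, f) \<in> K \<longleftrightarrow> rel_partrec k f 2 F)"
proof -
  have indicator: "total_pfun 1 (\<lambda>xs. of_bool (hd xs \<in> M))
      = (\<lambda>xs. if length xs = 1 then Some (if hd xs \<in> M then 1 else 0) else None)" for M :: "nat set"
    by (simp add: total_pfun_def fun_eq_iff)
  interpret universal_class K F
  proof unfold_locales
    show "(1, total_pfun 1 (\<lambda>_. 0)) \<in> K" "(1, total_pfun 1 (\<lambda>xs. Suc (hd xs))) \<in> K"
      using rec partrec.zero partrec.succ by (simp_all add: total_pfun_def)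
    show "(k, total_pfun k (\<lambda>xs. xs ! i)) \<in> K" if "1 \<le> k" "i < k" for k i
      using rec partrec.proj[OF that(2)] that(1) by (simp add: total_pfun_def)
    show "(Suc k, prec g h) \<in> K" if "1 \<le> k" "(k, g) \<in> K" "(Suc (Suc k), h) \<in> K" for k g h
      using primr wf that by fastforce
  qed (use subst muc rec cond2[folded indicator] FK univ in simp_all)
  show ?thesis using rel_partrec_if_mem mem_if_rel_partrec by blast
qed

end
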